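(* Suppose $f^{cl}_{\pi_\star}$ is $\delta$-ISS (for all perturbations, i.e. $\eta=\infty$) with linear gain $\gamma(x)=\gamma x$, $\gamma>0$. Fix a policy $\pi$ and $\xi\in\mathcal X$, assume $\pi,\pi_\star$ are continuously differentiable with $\|\bar\pi(x)-\bar\pi(x_0)-\partial_x\bar\pi(x_0)(x-x_0)\|\le\frac{L_{\partial\pi}}{2}\|x-x_0\|^2$ for all $x,x_0$ and $\bar\pi\in\{\pi,\pi_\star\}$, and assume $\gamma L_{\partial\pi}\ge1$. If \[\max_{0\le t\le T-1}\|\partial_x\Delta_t^{\pi_\star}(\xi;\pi)\|\le\frac1{4\gamma},\qquad\max_{0\le t\le T-1}\|\Delta_t^{\pi_\star}(\xi;\pi)\|\le\frac1{16\gamma^2L_{\partial\pi}},\] then for all $1\le t\le T$, $\|x_t^{\pi_\star}(\xi)-x_t^\pi(\xi)\|\le\max_{0\le k\le t-1}8\gamma\|\Delta_k^{\pi_\star}(\xi;\pi)\|$.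
   Context: Dynamics $x_{t+1}=f(x_t,u_t)$, $x_0=\xi$. For a policy $\pi$, $f^{cl}_\pi(x,\Delta):=f(x,\pi(x)+\Delta)$; $x_t^\pi(\xi,\{\Delta_s\})$ is the state at time $t$, $x_t^\pi(\xi):=x_t^\pi(\xi,\{0\})$; initial conditions in compact $\mathcal X$. $f^{cl}_{\pi_\star}$ is $\delta$-ISS with gain $\gamma(\cdot)$ if there is a class $\mathcal{KL}$ function $\beta$ with $\|x_t^{\pi_\star}(\xi_1;\{\Delta_s\}_{s=0}^{t-1})-x_t^{\pi_\star}(\xi_2;\{0\})\|\le\beta(\|\xi_1-\xi_2\|,t)+\gamma(\max_{0\le k\le t-1}\|\Delta_k\|)$ for all $\xi_1,\xi_2\in\mathcal X$, all $t$ and all perturbation sequences. $\Delta_t^{\pi_\star}(\xi;\pi):=\pi(x_t^{\pi_\star}(\xi))-\pi_\star(x_t^{\pi_\star}(\xi))$ and $\partial_x\Delta_t^{\pi_\star}(\xi;\pi):=\partial_x\pi(x_t^{\pi_\star}(\xi))-\partial_x\pi_\star(x_t^{\pi_\star}(\xi))$; norms are Euclidean/operator norms. *)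

theory Defs
  imports "HOL-Analysis.Analysis"
begin

primrec traj :: "('x \<Rightarrow> 'u::real_vector \<Rightarrow> 'x) \<Rightarrow> ('x \<Rightarrow> 'u) \<Rightarrow> 'x \<Rightarrow> (nat \<Rightarrow> 'u) \<Rightarrow> nat \<Rightarrow> 'x" where
  "traj f \<pi> \<xi> \<Delta> 0 = \<xi>"
| "traj f \<pi> \<xi> \<Delta> (Suc t) = f (traj f \<pi> \<xi> \<Delta> t) (\<pi> (traj f \<pi> \<xi> \<Delta> t) + \<Delta> t)"

definition maxupto :: "(nat \<Rightarrow> real) \<Rightarrow> nat \<Rightarrow> real" where
  "maxupto a t = (if t = 0 then 0 else Max (a ` {..<t}))"

definition classK :: "(real \<Rightarrow> real) \<Rightarrow> bool" where
  "classK \<alpha> \<longleftrightarrow> continuous_on {0..} \<alpha> \<and> strict_mono_on {0..} \<alpha> \<and> \<alpha> 0 = 0"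

definition classKL :: "(real \<Rightarrow> nat \<Rightarrow> real) \<Rightarrow> bool" where
  "classKL \<beta> \<longleftrightarrow> (\<forall>t. classK (\<lambda>r. \<beta> r t)) \<and>
     (\<forall>r\<ge>0. antimono (\<beta> r) \<and> (\<beta> r \<longlonglongrightarrow> 0))"

definition delta_ISS :: "('x::real_normed_vector \<Rightarrow> 'u::real_normed_vector \<Rightarrow> 'x) \<Rightarrow> ('x \<Rightarrow> 'u) \<Rightarrow> 'x set
     \<Rightarrow> (real \<Rightarrow> real) \<Rightarrow> bool" where
  "delta_ISS f \<pi> X \<gamma> \<longleftrightarrow> (\<exists>\<beta>. classKL \<beta> \<and>
     (\<forall>\<xi>1\<in>X. \<forall>\<xi>2\<in>X. \<forall>t. \<forall>\<Delta>.
        norm (traj f \<pi> \<xi>1 \<Delta> t - traj f \<pi> \<xi>2 (\<lambda>_. 0) t)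
          \<le> \<beta> (norm (\<xi>1 - \<xi>2)) t + \<gamma> (maxupto (\<lambda>k. norm (\<Delta> k)) t)))"

end

theory Submission
  imports Defs
begin

text \<open>Running the policy \<pi> is the same as running \<pi>* under the perturbation
  D_k = \<pi>(x_k) - \<pi>*(x_k), so \<delta>-ISS with equal initial states bounds the deviation
  e_t = |x*_t - x_t| by \<gamma> max_{k<t} |D_k|. A first-order Taylor expansion of both policies
  around the nominal state x*_k gives |D_k| \<le> \<delta>_k + c_k e_k + L e_k^2, where \<delta>_k and c_k
  are the policy and Jacobian gaps along the nominal trajectory. By strong induction on t,
  e_t \<le> A_t := max_{k<t} 8\<gamma>\<delta>_k: the smallness assumptions keep A_t \<le> 1/(2\<gamma>L), so the
  quadratic term is absorbed into a linear one and \<gamma>(\<delta>_k + c_k e_k + L e_k^2) \<le> A_t.\<close>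

lemma maxupto_ge: "k < t \<Longrightarrow> a k \<le> maxupto a t"
  unfolding maxupto_def by (auto intro!: Max_ge)

lemma maxupto_le: "0 < t \<Longrightarrow> (\<And>k. k < t \<Longrightarrow> a k \<le> c) \<Longrightarrow> maxupto a t \<le> c"
  unfolding maxupto_def by (auto intro!: Max.boundedI)

lemma maxupto_nonneg:
  assumes "\<And>k. 0 \<le> a k"
  shows "0 \<le> maxupto a t"
proof (cases "t = 0")
  case False
  then show ?thesis using assms maxupto_ge[of 0 t a] by (meson order_trans not_gr_zero)
qed (simp add: maxupto_def)

lemma maxupto_mono:
  assumes "k \<le> t" and "\<And>i. 0 \<le> a i"
  shows "maxupto a k \<le> maxupto a t"
proof (cases "k = 0")
  case True
  then show ?thesis using maxupto_nonneg[of a t] assms(2) by (simp add: maxupto_def)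
next
  case False
  then show ?thesis using assms(1) by (intro maxupto_le) (auto intro: maxupto_ge)
qed

lemma traj_eq_perturbed_traj:
  "traj f \<pi> \<xi> (\<lambda>_. 0) t
     = traj f \<pi>s \<xi> (\<lambda>k. \<pi> (traj f \<pi> \<xi> (\<lambda>_. 0) k) - \<pi>s (traj f \<pi> \<xi> (\<lambda>_. 0) k)) t"
  by (induction t) auto

lemma classKL_zero: "classKL \<beta> \<Longrightarrow> \<beta> 0 t = 0"
  unfolding classKL_def classK_def by blast

lemma delta_ISS_perturbation_bound:
  assumes "delta_ISS f \<pi> X (\<lambda>r. \<gamma> * r)" and "\<xi> \<in> X"
  shows "norm (traj f \<pi> \<xi> \<Delta> t - traj f \<pi> \<xi> (\<lambda>_. 0) t) \<le> \<gamma> * maxupto (\<lambda>k. norm (\<Delta> k)) t"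
proof -
  obtain \<beta> where "classKL \<beta>" and "\<forall>\<xi>1\<in>X. \<forall>\<xi>2\<in>X. \<forall>t. \<forall>\<Delta>.
      norm (traj f \<pi> \<xi>1 \<Delta> t - traj f \<pi> \<xi>2 (\<lambda>_. 0) t)
        \<le> \<beta> (norm (\<xi>1 - \<xi>2)) t + \<gamma> * maxupto (\<lambda>k. norm (\<Delta> k)) t"
    using assms(1) unfolding delta_ISS_def by blast
  then show ?thesis using assms(2) classKL_zero by fastforce
qed

lemma policy_gap_taylor_bound:
  fixes \<pi> \<pi>s :: "'a::real_normed_vector \<Rightarrow> 'b::real_normed_vector"
    and D\<pi> D\<pi>s :: "'a \<Rightarrow>\<^sub>L 'b"
  assumes "norm (\<pi> x - \<pi> y - D\<pi> (x - y)) \<le> L / 2 * (norm (x - y))\<^sup>2"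
    and "norm (\<pi>s x - \<pi>s y - D\<pi>s (x - y)) \<le> L / 2 * (norm (x - y))\<^sup>2"
  shows "norm (\<pi> x - \<pi>s x)
           \<le> norm (\<pi> y - \<pi>s y) + norm (D\<pi> - D\<pi>s) * norm (x - y) + L * (norm (x - y))\<^sup>2"
proof -
  let ?e = "x - y"
  have "\<pi> x - \<pi>s x = (\<pi> y - \<pi>s y) + (D\<pi> - D\<pi>s) ?e
      + (\<pi> x - \<pi> y - D\<pi> ?e) - (\<pi>s x - \<pi>s y - D\<pi>s ?e)"
    by (simp add: blinfun.diff_left algebra_simps)
  also have "norm \<dots> \<le> norm (\<pi> y - \<pi>s y) + norm ((D\<pi> - D\<pi>s) ?e)
      + norm (\<pi> x - \<pi> y - D\<pi> ?e) + norm (\<pi>s x - \<pi>s y - D\<pi>s ?e)"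
    by (smt (verit) norm_triangle_ineq norm_triangle_ineq4)
  finally show ?thesis using assms norm_blinfun[of "D\<pi> - D\<pi>s" ?e] by linarith
qed

lemma quadratic_perturbation_step:
  fixes \<gamma> L a e \<delta> c :: real
  assumes "0 < \<gamma>" "0 < L" "0 \<le> e" "e \<le> a" "e \<le> 1 / (2 * \<gamma> * L)"
    and "\<delta> \<le> a / (8 * \<gamma>)" "c \<le> 1 / (4 * \<gamma>)"
  shows "\<gamma> * (\<delta> + c * e + L * e\<^sup>2) \<le> a"
proof -
  have "L * e\<^sup>2 \<le> L * (e * (1 / (2 * \<gamma> * L)))"
    unfolding power2_eq_square using assms by (intro mult_left_mono) auto
  also have "\<dots> = e / (2 * \<gamma>)" using assms by simp
  finally have quad: "L * e\<^sup>2 \<le> e / (2 * \<gamma>)" .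
  have lin: "c * e \<le> e / (4 * \<gamma>)" using mult_right_mono[OF assms(7,3)] by simp
  have "\<gamma> * (\<delta> + c * e + L * e\<^sup>2) \<le> \<gamma> * (a / (8 * \<gamma>) + e / (4 * \<gamma>) + e / (2 * \<gamma>))"
    using assms(1,6) lin quad by (intro mult_left_mono) auto
  also have "\<dots> = a / 8 + e / 4 + e / 2" using assms(1) by (simp add: field_simps)
  also have "\<dots> \<le> a" using assms(3,4) by linarith
  finally show ?thesis .
qed

lemma quadratic_feedback_error_bound:
  fixes e p \<delta> c :: "nat \<Rightarrow> real" and \<gamma> L :: real
  assumes "0 < \<gamma>" and "1 \<le> \<gamma> * L"
    and e_nonneg: "\<And>k. 0 \<le> e k" and \<delta>_nonneg: "\<And>k. 0 \<le> \<delta> k"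
    and e_le: "\<And>t. t \<le> T \<Longrightarrow> e t \<le> \<gamma> * maxupto p t"
    and p_le: "\<And>k. k < T \<Longrightarrow> p k \<le> \<delta> k + c k * e k + L * (e k)\<^sup>2"
    and c_le: "\<And>k. k < T \<Longrightarrow> c k \<le> 1 / (4 * \<gamma>)"
    and \<delta>_le: "\<And>k. k < T \<Longrightarrow> \<delta> k \<le> 1 / (16 * \<gamma>\<^sup>2 * L)"
  shows "t \<le> T \<Longrightarrow> e t \<le> maxupto (\<lambda>k. 8 * \<gamma> * \<delta> k) t"
proof (induction t rule: less_induct)
  case (less t)
  define A where "A t = maxupto (\<lambda>k. 8 * \<gamma> * \<delta> k) t" for t
  have "0 < L" using assms(1,2) by (smt (verit) mult_nonneg_nonpos)
  have A_mono: "k \<le> t \<Longrightarrow> A k \<le> A t" for k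
    unfolding A_def using assms(1) \<delta>_nonneg by (intro maxupto_mono) auto
  show ?case
  proof (cases "t = 0")
    case True
    then show ?thesis using e_le[of 0] by (simp add: maxupto_def)
  next
    case False
    have A_small: "A t \<le> 1 / (2 * \<gamma> * L)"
    proof -
      have "A t \<le> 8 * \<gamma> * (1 / (16 * \<gamma>\<^sup>2 * L))"
        unfolding A_def
      proof (rule maxupto_le)
        fix k assume "k < t"
        then show "8 * \<gamma> * \<delta> k \<le> 8 * \<gamma> * (1 / (16 * \<gamma>\<^sup>2 * L))"
          using less.prems assms(1) \<delta>_le by (intro mult_left_mono) auto
      qed (use False in auto)
      also have "\<dots> = 1 / (2 * \<gamma> * L)" using assms(1) \<open>0 < L\<close> by (simp add: power2_eq_square)
      finally show ?thesis .
    qed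
    have "\<gamma> * maxupto p t \<le> \<gamma> * (A t / \<gamma>)"
    proof (intro mult_left_mono maxupto_le)
      fix k assume "k < t"
      have "e k \<le> A t" using less.IH[OF \<open>k < t\<close>] \<open>k < t\<close> less.prems A_mono[of k] by (simp add: A_def)
      moreover have "\<delta> k \<le> A t / (8 * \<gamma>)"
        using maxupto_ge[OF \<open>k < t\<close>, of "\<lambda>k. 8 * \<gamma> * \<delta> k"] assms(1) by (simp add: A_def field_simps)
      ultimately have "\<gamma> * (\<delta> k + c k * e k + L * (e k)\<^sup>2) \<le> A t"
        using quadratic_perturbation_step[OF assms(1) \<open>0 < L\<close> e_nonneg] A_small c_le \<open>k < t\<close> less.prems
        by simp
      moreover have "p k \<le> \<delta> k + c k * e k + L * (e k)\<^sup>2" using p_le \<open>k < t\<close> less.prems by simp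
      ultimately have "\<gamma> * p k \<le> A t" using assms(1) by (smt (verit) mult_left_mono)
      then show "p k \<le> A t / \<gamma>" using assms(1) by (simp add: field_simps)
    qed (use False assms(1) in auto)
    then show ?thesis using e_le[OF less.prems] assms(1) by (simp add: A_def)
  qed
qed

theorem mainTheorem5:
  fixes f :: "'x::euclidean_space \<Rightarrow> 'u::euclidean_space \<Rightarrow> 'x"
    and \<pi> \<pi>s :: "'x \<Rightarrow> 'u"
    and D\<pi> D\<pi>s :: "'x \<Rightarrow> ('x \<Rightarrow>\<^sub>L 'u)"
    and X :: "'x set" and \<xi> :: 'x
    and \<gamma> L :: real and T :: nat
  assumes "compact X"
    and "\<gamma> > 0"
    and ISS: "delta_ISS f \<pi>s X (\<lambda>r. \<gamma> * r)"
    and "\<xi> \<in> X"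
    and "\<And>x. (\<pi> has_derivative blinfun_apply (D\<pi> x)) (at x)"
    and "\<And>x. (\<pi>s has_derivative blinfun_apply (D\<pi>s x)) (at x)"
    and "continuous_on UNIV D\<pi>" and "continuous_on UNIV D\<pi>s"
    and "\<And>x x0. norm (\<pi> x - \<pi> x0 - D\<pi> x0 (x - x0)) \<le> L / 2 * (norm (x - x0))\<^sup>2"
    and "\<And>x x0. norm (\<pi>s x - \<pi>s x0 - D\<pi>s x0 (x - x0)) \<le> L / 2 * (norm (x - x0))\<^sup>2"
    and "\<gamma> * L \<ge> 1"
    and "maxupto (\<lambda>t. norm (D\<pi> (traj f \<pi>s \<xi> (\<lambda>_. 0) t) - D\<pi>s (traj f \<pi>s \<xi> (\<lambda>_. 0) t))) T
           \<le> 1 / (4 * \<gamma>)"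
    and "maxupto (\<lambda>t. norm (\<pi> (traj f \<pi>s \<xi> (\<lambda>_. 0) t) - \<pi>s (traj f \<pi>s \<xi> (\<lambda>_. 0) t))) T
           \<le> 1 / (16 * \<gamma>\<^sup>2 * L)"
  shows "\<forall>t. 1 \<le> t \<and> t \<le> T \<longrightarrow>
           norm (traj f \<pi>s \<xi> (\<lambda>_. 0) t - traj f \<pi> \<xi> (\<lambda>_. 0) t)
             \<le> maxupto (\<lambda>k. 8 * \<gamma> * norm (\<pi> (traj f \<pi>s \<xi> (\<lambda>_. 0) k) - \<pi>s (traj f \<pi>s \<xi> (\<lambda>_. 0) k))) t"
proof -
  let ?y = "traj f \<pi>s \<xi> (\<lambda>_. 0)" and ?x = "traj f \<pi> \<xi> (\<lambda>_. 0)"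
  have "norm (?x t - ?y t) \<le> \<gamma> * maxupto (\<lambda>k. norm (\<pi> (?x k) - \<pi>s (?x k))) t" for t
    unfolding traj_eq_perturbed_traj[of f \<pi> \<xi> t \<pi>s]
    by (rule delta_ISS_perturbation_bound[OF ISS \<open>\<xi> \<in> X\<close>])
  then have ISS_gap: "norm (?y t - ?x t) \<le> \<gamma> * maxupto (\<lambda>k. norm (\<pi> (?x k) - \<pi>s (?x k))) t" for t
    by (simp add: norm_minus_commute)
  have Taylor_gap: "norm (\<pi> (?x k) - \<pi>s (?x k))
      \<le> norm (\<pi> (?y k) - \<pi>s (?y k)) + norm (D\<pi> (?y k) - D\<pi>s (?y k)) * norm (?y k - ?x k)
        + L * (norm (?y k - ?x k))\<^sup>2" for k
    using policy_gap_taylor_bound[OF assms(9,10)[of "?x k" "?y k"]] by (simp add: norm_minus_commute)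
  have "k < T \<Longrightarrow> norm (D\<pi> (?y k) - D\<pi>s (?y k)) \<le> 1 / (4 * \<gamma>)" for k
    using maxupto_ge[of k T] assms(12) by (rule order_trans)
  moreover have "k < T \<Longrightarrow> norm (\<pi> (?y k) - \<pi>s (?y k)) \<le> 1 / (16 * \<gamma>\<^sup>2 * L)" for k
    using maxupto_ge[of k T] assms(13) by (rule order_trans)
  ultimately show ?thesis
    using quadratic_feedback_error_bound[OF \<open>\<gamma> > 0\<close> \<open>\<gamma> * L \<ge> 1\<close> norm_ge_zero norm_ge_zero
        ISS_gap Taylor_gap] by blast
qed

end
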